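(* Let $n,k$ be integers with $2\le 2k\le n-4$. Let $\eta=(\eta_1<\dots<\eta_l)\in\overline{\mathbb{D}}^{\,\mathrm{o}}_{2k+2}$, where $\overline{\mathbb{D}}^{\,\mathrm{o}}_{2k+2}=\mathbb{D}^{\,\mathrm{o}}_{2k+2}\setminus\{(1,2k+1)\}$ if $2k=n-4$ and $\overline{\mathbb{D}}^{\,\mathrm{o}}_{2k+2}=\mathbb{D}^{\,\mathrm{o}}_{2k+2}$ otherwise. Let $Y_{\eta^*}$ be the Young diagram whose main diagonal consists of exactly the cells $c_{1,1},\dots,c_{l+1,l+1}$ and which satisfies $h_{1,1}=2n-5$, $h_{i,i}=\eta_{l-(i-2)}$ for $2\le i\le l+1$, and $a(c_{i,i})=l(c_{i,i})$ for $1\le i\le l+1$. Let $\lambda$ be the partition whose parts are the hook lengths of the first-column cells of $Y_{\eta^*}$. Then: (1) $\lambda$ has exactly $n-2$ parts; (2) its largest part is $\lambda_{n-2}=2n-5$; (3) $\#\mathcal{M}_\lambda=n-3$.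
   Context: $\mathbb{D}^{\,\mathrm{o}}_N$ is the set of partitions of $N$ into distinct odd parts, i.e. sequences $(\eta_1<\dots<\eta_l)$ of odd positive integers with sum $N$ and $l\ge 2$. For a partition $\lambda=(\lambda_1<\dots<\lambda_t)$ into distinct parts, $\mathcal{M}_\lambda=\{1,\dots,\lambda_t\}\setminus\{\lambda_1,\dots,\lambda_t\}$. Young diagrams are in English convention: rows top to bottom, columns left to right, $c_{i,j}$ the cell in row $i$, column $j$; arm $a(c_{i,j})$ = number of cells to its right in its row, leg $l(c_{i,j})$ = number of cells below it in its column, hook length $h_{i,j}=a+l+1$. *)

theory Defs
  imports Main
begin

definition distinct_odd_parts :: "nat \<Rightarrow> nat list set" where
  "distinct_odd_parts N = {eta. sorted_wrt (<) eta \<and> (\<forall>x\<in>set eta. odd x)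
                                \<and> sum_list eta = N \<and> length eta \<ge> 2}"

text \<open>Young diagrams (English convention) as finite sets of cells (i,j),
  i = row, j = column, both 1-based, closed under moving up/left.\<close>
definition young_diagram :: "(nat \<times> nat) set \<Rightarrow> bool" where
  "young_diagram Y \<longleftrightarrow> finite Y \<and> (\<forall>(i,j)\<in>Y. 1 \<le> i \<and> 1 \<le> j) \<and>
     (\<forall>i j i' j'. (i,j) \<in> Y \<and> 1 \<le> i' \<and> i' \<le> i \<and> 1 \<le> j' \<and> j' \<le> j \<longrightarrow> (i',j') \<in> Y)"

definition arm :: "(nat \<times> nat) set \<Rightarrow> nat \<Rightarrow> nat \<Rightarrow> nat" where
  "arm Y i j = card {j'. j < j' \<and> (i,j') \<in> Y}"

definition leg :: "(nat \<times> nat) set \<Rightarrow> nat \<Rightarrow> nat \<Rightarrow> nat" where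
  "leg Y i j = card {i'. i < i' \<and> (i',j) \<in> Y}"

definition hook :: "(nat \<times> nat) set \<Rightarrow> nat \<Rightarrow> nat \<Rightarrow> nat" where
  "hook Y i j = arm Y i j + leg Y i j + 1"

definition num_rows :: "(nat \<times> nat) set \<Rightarrow> nat" where
  "num_rows Y = card {i. (i,1) \<in> Y}"

definition first_col_hook_partition :: "(nat \<times> nat) set \<Rightarrow> nat list" where
  "first_col_hook_partition Y = sort (map (\<lambda>i. hook Y i 1) [1..<Suc (num_rows Y)])"

definition missing_set :: "nat list \<Rightarrow> nat set" where
  "missing_set lam = {1..last lam} - set lam"

end

theory Submission
  imports Defs "HOL-Library.Multiset"
begin

(* Its cells are rows 1..r, so leg(c_{i,1}) = r - i, and arms weakly decrease downwards;
  hence the first-column hooks are r distinct numbers, the largest being h_{1,1}.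
  From a(c_{1,1}) = l(c_{1,1}) and h_{1,1} = 2n - 5 one gets l(c_{1,1}) = n - 3, so
  r = n - 2, and the parts fill n - 2 of the values 1..2n-5, missing exactly n - 3. *)

lemma card_missing_set:
  assumes "sorted_wrt (<) lam" and "lam \<noteq> []" and "0 \<notin> set lam"
  shows "card (missing_set lam) = last lam - length lam"
proof -
  have "sorted lam" "distinct lam" using assms(1) by (simp_all add: strict_sorted_iff)
  have "set lam \<subseteq> {1..last lam}"
  proof
    fix x assume "x \<in> set lam"
    then obtain i where "i < length lam" "x = lam ! i" by (metis in_set_conv_nth)
    then have "x \<le> last lam"
      using sorted_nth_mono[OF \<open>sorted lam\<close>, of i "length lam - 1"] last_conv_nth[OF assms(2)]
      by simp
    moreover have "x \<noteq> 0" using \<open>x \<in> set lam\<close> assms(3) by metis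
    ultimately show "x \<in> {1..last lam}" by simp
  qed
  then show ?thesis
    unfolding missing_set_def
    by (simp add: card_Diff_subset distinct_card[OF \<open>distinct lam\<close>])
qed

lemma young_diagram_first_column:
  assumes "young_diagram Y"
  shows "{i. (i, 1) \<in> Y} = {1..num_rows Y}"
proof -
  let ?C = "{i. (i, 1) \<in> Y}"
  have "?C = fst ` (Y \<inter> {p. snd p = 1})" by force
  then have "finite ?C" using assms unfolding young_diagram_def by simp
  have pos: "1 \<le> i" if "i \<in> ?C" for i using assms that unfolding young_diagram_def by auto
  have down: "i' \<in> ?C" if "i \<in> ?C" "1 \<le> i'" "i' \<le> i" for i i'
    using assms that unfolding young_diagram_def by blast
  show ?thesis
  proof (cases "?C = {}")
    case True
    then show ?thesis by (simp add: num_rows_def)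
  next
    case False
    define r where "r = Max ?C"
    have "r \<in> ?C" using Max_in[OF \<open>finite ?C\<close> False] r_def by simp
    have "?C = {1..r}"
    proof
      show "?C \<subseteq> {1..r}" using pos Max_ge[OF \<open>finite ?C\<close>] r_def by auto
      show "{1..r} \<subseteq> ?C" using down[OF \<open>r \<in> ?C\<close>] by auto
    qed
    then show ?thesis by (simp add: num_rows_def)
  qed
qed

lemma leg_first_column:
  assumes "young_diagram Y" and "1 \<le> i"
  shows "leg Y i 1 = num_rows Y - i"
proof -
  have "{i'. i < i' \<and> (i', 1) \<in> Y} = {i + 1..num_rows Y}"
    using young_diagram_first_column[OF assms(1)] assms(2) by auto
  then show ?thesis unfolding leg_def by simp
qed

lemma arm_antimono:
  assumes "young_diagram Y" and "1 \<le> i" and "i \<le> i'"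
  shows "arm Y i' j \<le> arm Y i j"
proof -
  have "{j'. j < j' \<and> (i, j') \<in> Y} \<subseteq> snd ` Y" by force
  moreover have "finite Y" using assms(1) unfolding young_diagram_def by simp
  moreover have "{j'. j < j' \<and> (i', j') \<in> Y} \<subseteq> {j'. j < j' \<and> (i, j') \<in> Y}"
    using assms unfolding young_diagram_def by blast
  ultimately show ?thesis unfolding arm_def by (meson card_mono finite_imageI finite_subset)
qed

lemma hook_first_column_strict_antimono:
  assumes "young_diagram Y" and "1 \<le> i" and "i < i'" and "i' \<le> num_rows Y"
  shows "hook Y i' 1 < hook Y i 1"
  using arm_antimono[OF assms(1,2), of i' 1] leg_first_column[OF assms(1)] assms(2-4)
  unfolding hook_def by simp

lemma sorted_wrt_first_column_hooks:
  assumes "young_diagram Y"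
  shows "sorted_wrt (>) (map (\<lambda>i. hook Y i 1) [1..<Suc (num_rows Y)])"
proof -
  have "sorted_wrt (\<lambda>i i'. hook Y i' 1 < hook Y i 1) [1..<Suc (num_rows Y)]"
  proof (rule sorted_wrt_mono_rel[OF _ sorted_wrt_upt])
    fix i i' assume "i \<in> set [1..<Suc (num_rows Y)]" "i' \<in> set [1..<Suc (num_rows Y)]" "i < i'"
    then show "hook Y i' 1 < hook Y i 1"
      by (intro hook_first_column_strict_antimono[OF assms]) auto
  qed
  then show ?thesis by (simp add: sorted_wrt_map)
qed

lemma first_col_hook_partition_eq_rev:
  assumes "young_diagram Y"
  shows "first_col_hook_partition Y = rev (map (\<lambda>i. hook Y i 1) [1..<Suc (num_rows Y)])"
proof -
  let ?hs = "map (\<lambda>i. hook Y i 1) [1..<Suc (num_rows Y)]"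
  have "sorted_wrt (<) (rev ?hs)"
    using sorted_wrt_first_column_hooks[OF assms] by (simp add: sorted_wrt_rev)
  then have "sorted (rev ?hs)" by (simp add: strict_sorted_iff)
  then show ?thesis
    unfolding first_col_hook_partition_def by (intro properties_for_sort) simp_all
qed

lemma sorted_wrt_first_col_hook_partition:
  assumes "young_diagram Y"
  shows "sorted_wrt (<) (first_col_hook_partition Y)"
  using sorted_wrt_first_column_hooks[OF assms]
  by (simp add: first_col_hook_partition_eq_rev[OF assms] sorted_wrt_rev)

lemma length_first_col_hook_partition:
  "length (first_col_hook_partition Y) = num_rows Y"
  unfolding first_col_hook_partition_def by simp

lemma last_first_col_hook_partition:
  assumes "young_diagram Y" and "num_rows Y \<noteq> 0"
  shows "last (first_col_hook_partition Y) = hook Y 1 1"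
  using assms by (simp add: first_col_hook_partition_eq_rev last_rev upt_conv_Cons del: upt_Suc)

lemma zero_notin_first_col_hook_partition:
  "0 \<notin> set (first_col_hook_partition Y)"
  unfolding first_col_hook_partition_def hook_def by auto

theorem corollary4p9:
  fixes n k :: nat and eta :: "nat list" and Y :: "(nat \<times> nat) set"
  assumes "2 \<le> 2 * k" and "2 * k + 4 \<le> n"
    and "eta \<in> (if 2 * k + 4 = n then distinct_odd_parts (2 * k + 2) - {[1, 2 * k + 1]}
                 else distinct_odd_parts (2 * k + 2))"
    and "young_diagram Y"
    and "{(i, j) \<in> Y. i = j} = {(i, i) | i. 1 \<le> i \<and> i \<le> length eta + 1}"
    and "hook Y 1 1 = 2 * n - 5"
    and "\<forall>i. 2 \<le> i \<and> i \<le> length eta + 1 \<longrightarrow>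
           hook Y i i = eta ! (length eta - (i - 2) - 1)"
    and "\<forall>i. 1 \<le> i \<and> i \<le> length eta + 1 \<longrightarrow> arm Y i i = leg Y i i"
  shows "length (first_col_hook_partition Y) = n - 2
         \<and> first_col_hook_partition Y ! (n - 3) = 2 * n - 5
         \<and> card (missing_set (first_col_hook_partition Y)) = n - 3"
proof -
  let ?lam = "first_col_hook_partition Y"
  have "n \<ge> 6" using assms(1,2) by linarith
  have "leg Y 1 1 = n - 3" using assms(6,8) \<open>n \<ge> 6\<close> unfolding hook_def by auto
  then have rows: "num_rows Y = n - 2"
    using leg_first_column[OF assms(4), of 1] \<open>n \<ge> 6\<close> by simp
  then have len: "length ?lam = n - 2" by (simp add: length_first_col_hook_partition)
  have last: "last ?lam = 2 * n - 5"
    using last_first_col_hook_partition[OF assms(4)] rows assms(6) \<open>n \<ge> 6\<close> by simp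
  have "?lam \<noteq> []" and "length ?lam - 1 = n - 3" using len \<open>n \<ge> 6\<close> by auto
  then have "?lam ! (n - 3) = 2 * n - 5" using last_conv_nth[of ?lam] last by simp
  moreover have "card (missing_set ?lam) = n - 3"
    using card_missing_set[OF sorted_wrt_first_col_hook_partition[OF assms(4)] _
        zero_notin_first_col_hook_partition] len last \<open>n \<ge> 6\<close> by force
  ultimately show ?thesis using len by simp
qed

end
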